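(* Let $x,y\in S_n$ and let $M$ be the $2\times n$ matrix with rows $x$ and $y$. Suppose every column of $M$ is one of $(1,1)^T,(1,-1)^T,(1,0)^T,(0,1)^T,(0,0)^T$, occurring $a_1,a_2,b_1,b_2,c$ times respectively ($a_1+a_2+b_1+b_2+c=n$). Then $$|\mathrm{Elim}(\{x\})\cap\mathrm{Elim}(\{y\})|=3^c\big(2^{b_1+b_2}(2^{a_1}+2^{a_2})-2^{b_1+1}-2^{b_2+1}+2\big)$$ and $$|\mathrm{Elim}(\{x,y\})|=3^c\big(3^{b_1}2^{a_1+a_2+b_2}+3^{b_2}2^{a_1+a_2+b_1}-2^{b_1+b_2}(2^{a_1}+2^{a_2})-3^{b_1}-3^{b_2}+2^{b_1+1}+2^{b_2+1}-2\big).$$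
   Context: $S_n$ is the set of all nonzero $n$-tuples in $\{-1,0,1\}^n$ whose first nonzero entry equals $1$. A tuple $t=(t_1,\dots,t_n)\in\{1,0,-1,u\}^n$ ($u$ a formal symbol) eliminates $s\in S_n$ if: (i) $t_i\neq0$ and $s_i\neq0$ for some $i$; (ii) there is $k\in\{+1,-1\}$ with $t_i=ks_i$ for all $i$ with $s_i\neq0$ and $t_i\neq0$; (iii) $s_i=0$ whenever $t_i=u$. For $X\subseteq S_n$, $\mathrm{Elim}(X)$ is the set of elements of $S_n$ eliminated by at least one element of $X$. *)

theory Defs
  imports Main
begin

text \<open>Entries of a general eliminating tuple: an integer value or the formal symbol u.\<close>
datatype entry = Num int | U

definition S :: "nat \<Rightarrow> int list set" where
  "S n = {s. length s = n \<and> set s \<subseteq> {-1, 0, 1} \<and>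
             (\<exists>i<n. s ! i = 1 \<and> (\<forall>j<i. s ! j = 0))}"

definition eliminates :: "entry list \<Rightarrow> int list \<Rightarrow> bool" where
  "eliminates t s \<longleftrightarrow> length t = length s \<and>
     (\<exists>i<length s. t ! i \<noteq> Num 0 \<and> s ! i \<noteq> 0) \<and>
     (\<exists>k\<in>{1, -1::int}. \<forall>i<length s. s ! i \<noteq> 0 \<and> t ! i \<noteq> Num 0 \<longrightarrow> t ! i = Num (k * s ! i)) \<and>
     (\<forall>i<length s. t ! i = U \<longrightarrow> s ! i = 0)"

definition Elim :: "nat \<Rightarrow> int list set \<Rightarrow> int list set" where
  "Elim n X = {s \<in> S n. \<exists>x\<in>X. eliminates (map Num x) s}"

end

theory Submission
  imports Defs
begin

text \<open>
  We count among all ternary words of length n instead of inside S n: every nonzero word is exactly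
  one of s, -s with s in S n, and elimination by a vector x is invariant under s |-> -s, so every
  count in S n is half the corresponding count among ternary words. A word s is eliminated by x iff
  s agrees with x or with -x on the common support and that support is nonempty. Agreeing with both
  x and -x means the supports are disjoint, hence the indicator of elimination is
  [agree with x] + [agree with -x] - 2 [disjoint supports]. Each term is a conjunction of
  coordinatewise constraints, so its sum over ternary words factors over the coordinates and only
  depends on the numbers of columns of each type; the union is then counted by inclusion-exclusion.
\<close>

definition ternary_lists :: "nat \<Rightarrow> int list set" where
  "ternary_lists n = {s. set s \<subseteq> {-1, 0, 1} \<and> length s = n}"

lemma finite_ternary_lists: "finite (ternary_lists n)"
  unfolding ternary_lists_def by (rule finite_lists_length_eq) simp

lemma S_subset_ternary_lists: "S n \<subseteq> ternary_lists n"
  unfolding S_def ternary_lists_def by auto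

lemma map_uminus_ternary_lists: "s \<in> ternary_lists n \<Longrightarrow> map uminus s \<in> ternary_lists n"
  unfolding ternary_lists_def by auto

lemma sum_prod_ternary_lists:
  fixes f :: "nat \<Rightarrow> int \<Rightarrow> 'a::comm_semiring_1"
  shows "(\<Sum>s\<in>ternary_lists n. \<Prod>i<n. f i (s ! i)) = (\<Prod>i<n. \<Sum>v\<in>{-1, 0, 1}. f i v)"
proof (induction n arbitrary: f)
  case 0
  have "ternary_lists 0 = {[]}"
    unfolding ternary_lists_def by auto
  then show ?case by simp
next
  case (Suc n)
  have "(\<Sum>s\<in>ternary_lists (Suc n). \<Prod>i<Suc n. f i (s ! i))
      = (\<Sum>(s, v)\<in>ternary_lists n \<times> {-1, 0, 1}. \<Prod>i<Suc n. f i ((v # s) ! i))"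
    unfolding ternary_lists_def lists_length_Suc_eq
    by (subst sum.reindex) (auto simp: inj_on_def case_prod_beta)
  also have "\<dots> = (\<Sum>s\<in>ternary_lists n. \<Sum>v\<in>{-1, 0, 1}. f 0 v * (\<Prod>i<n. f (Suc i) (s ! i)))"
    by (simp only: sum.cartesian_product prod.lessThan_Suc_shift nth_Cons_0 nth_Cons_Suc split_def fst_conv snd_conv)
  also have "\<dots> = (\<Sum>v\<in>{-1, 0, 1}. f 0 v) * (\<Sum>s\<in>ternary_lists n. \<Prod>i<n. f (Suc i) (s ! i))"
    by (simp only: sum_distrib_right sum_distrib_left)
  also have "\<dots> = (\<Prod>i<Suc n. \<Sum>v\<in>{-1, 0, 1}. f i v)"
    using Suc.IH[of "\<lambda>i. f (Suc i)"] by (simp only: prod.lessThan_Suc_shift)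
  finally show ?case .
qed

lemma sum_ternary_lists_of_bool_all:
  "(\<Sum>s\<in>ternary_lists n. of_bool (\<forall>i<n. R i (s ! i))) =
     (\<Prod>i<n. of_bool (R i (-1)) + of_bool (R i 0) + of_bool (R i 1) :: 'a::comm_semiring_1)"
proof -
  have "of_bool (\<forall>i<n. R i (s ! i)) = (\<Prod>i<n. of_bool (R i (s ! i)) :: 'a)" for s
    by (cases "\<forall>i<n. R i (s ! i)") (auto intro!: prod_zero)
  then show ?thesis
    using sum_prod_ternary_lists[of "\<lambda>i v. of_bool (R i v)"]
    by (simp add: add.assoc del: sum_of_bool_eq)
qed

lemma prod_lessThan_group:
  fixes n :: nat
  assumes "finite C" and "\<forall>i<n. h i \<in> C"
  shows "(\<Prod>i<n. g (h i)) = (\<Prod>c\<in>C. g c ^ card {i. i < n \<and> h i = c})"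
proof -
  have "(\<Prod>i<n. g (h i)) = (\<Prod>c\<in>C. \<Prod>i\<in>{i. i \<in> {..<n} \<and> h i = c}. g (h i))"
    by (rule prod.group[symmetric]) (simp_all add: assms image_subset_iff)
  also have "\<dots> = (\<Prod>c\<in>C. \<Prod>i\<in>{i. i < n \<and> h i = c}. g c)"
    by (intro prod.cong) auto
  finally show ?thesis by simp
qed

lemma card_lessThan_group:
  fixes n :: nat
  assumes "finite C" and "\<forall>i<n. h i \<in> C"
  shows "card {i. i < n \<and> P (h i)} = (\<Sum>c\<in>C \<inter> {c. P c}. card {i. i < n \<and> h i = c})"
proof -
  have "card {i. i < n \<and> P (h i)} = (\<Sum>c\<in>C \<inter> {c. P c}. \<Sum>i\<in>{i. i \<in> {i. i < n \<and> P (h i)} \<and> h i = c}. 1)"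
    unfolding card_eq_sum by (rule sum.group[symmetric]) (simp_all add: assms image_subset_iff)
  also have "\<dots> = (\<Sum>c\<in>C \<inter> {c. P c}. card {i. i < n \<and> h i = c})"
    by (intro sum.cong) (auto intro: arg_cong[where f = card])
  finally show ?thesis .
qed

lemma sum_ternary_lists_support_constraint:
  fixes p :: "'a::comm_semiring_1"
  assumes entries: "\<forall>i<n. x ! i \<in> {-1, 0, 1}"
    and free: "\<And>v. R 0 v"
    and uniform: "\<And>a. a \<in> {-1, 1} \<Longrightarrow> of_bool (R a (-1)) + of_bool (R a 0) + of_bool (R a 1) = p"
  shows "(\<Sum>s\<in>ternary_lists n. of_bool (\<forall>i<n. R (x ! i) (s ! i))) =
    3 ^ card {i. i < n \<and> x ! i = 0} * p ^ card {i. i < n \<and> x ! i \<noteq> 0}"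
proof -
  have "(\<Sum>s\<in>ternary_lists n. of_bool (\<forall>i<n. R (x ! i) (s ! i))) =
      (\<Prod>i<n. (\<lambda>z. if z then 3 else p) (x ! i = 0))"
    unfolding sum_ternary_lists_of_bool_all[of n "\<lambda>i. R (x ! i)"]
  proof (intro prod.cong refl)
    fix i assume "i \<in> {..<n}"
    then have "x ! i \<in> {-1, 0, 1}"
      using entries by simp
    then show "of_bool (R (x ! i) (-1)) + of_bool (R (x ! i) 0) + of_bool (R (x ! i) 1) =
        (\<lambda>z. if z then 3 else p) (x ! i = 0)"
      by (cases "x ! i = 0") (simp_all add: free uniform)
  qed
  also have "\<dots> = 3 ^ card {i. i < n \<and> x ! i = 0} * p ^ card {i. i < n \<and> x ! i \<noteq> 0}"
    by (subst prod_lessThan_group[of "{True, False}"]) simp_all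
  finally show ?thesis .
qed

definition column_count :: "nat \<Rightarrow> int list \<Rightarrow> int list \<Rightarrow> int \<Rightarrow> int \<Rightarrow> nat" where
  "column_count n x y a b = card {i. i < n \<and> x ! i = a \<and> y ! i = b}"

lemma sum_ternary_lists_joint_columns:
  assumes "finite C" and cols: "\<forall>i<n. (x ! i, y ! i) \<in> C"
  shows "(\<Sum>s\<in>ternary_lists n. of_bool (\<forall>i<n. A (x ! i) (s ! i)) * of_bool (\<forall>i<n. B (y ! i) (s ! i))) =
    (\<Prod>(a, b)\<in>C. (of_bool (A a (-1) \<and> B b (-1)) + of_bool (A a 0 \<and> B b 0) + of_bool (A a 1 \<and> B b 1))
      ^ column_count n x y a b :: 'a::comm_semiring_1)"
proof -
  have "(\<Sum>s\<in>ternary_lists n. of_bool (\<forall>i<n. A (x ! i) (s ! i)) * of_bool (\<forall>i<n. B (y ! i) (s ! i))) =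
      (\<Sum>s\<in>ternary_lists n. of_bool (\<forall>i<n. A (x ! i) (s ! i) \<and> B (y ! i) (s ! i)) :: 'a)"
    unfolding of_bool_conj[symmetric] by (intro sum.cong refl arg_cong[where f = of_bool]) blast
  also have "\<dots> = (\<Prod>i<n. (\<lambda>(a, b). of_bool (A a (-1) \<and> B b (-1)) + of_bool (A a 0 \<and> B b 0)
      + of_bool (A a 1 \<and> B b 1)) (x ! i, y ! i))"
    by (simp only: sum_ternary_lists_of_bool_all[of n "\<lambda>i v. A (x ! i) v \<and> B (y ! i) v"] split_conv)
  also have "\<dots> = (\<Prod>c\<in>C. (\<lambda>(a, b). of_bool (A a (-1) \<and> B b (-1)) + of_bool (A a 0 \<and> B b 0)
      + of_bool (A a 1 \<and> B b 1)) c ^ card {i. i < n \<and> (x ! i, y ! i) = c})"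
    by (rule prod_lessThan_group) (use assms in simp_all)
  finally show ?thesis
    by (simp add: column_count_def split_def prod_eq_iff)
qed

lemma ternary_lists_nonzero_eq:
  "{s \<in> ternary_lists n. \<exists>i<n. s ! i \<noteq> 0} = S n \<union> map uminus ` S n"
proof (intro equalityI subsetI)
  fix s assume "s \<in> {s \<in> ternary_lists n. \<exists>i<n. s ! i \<noteq> 0}"
  then have s: "set s \<subseteq> {-1, 0, 1}" "length s = n" and "\<exists>i. i < n \<and> s ! i \<noteq> 0"
    by (auto simp: ternary_lists_def)
  then obtain j where j: "j < n" "s ! j \<noteq> 0" and least: "\<forall>i<j. \<not> (i < n \<and> s ! i \<noteq> 0)"
    unfolding exists_least_iff[of "\<lambda>j. j < n \<and> s ! j \<noteq> 0"] by blast
  have before: "\<forall>i<j. s ! i = 0"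
    using least j(1) by auto
  have "s ! j \<in> {-1, 1}"
    using s j nth_mem by fastforce
  then show "s \<in> S n \<union> map uminus ` S n"
  proof
    assume "s ! j = -1"
    then have "map uminus s \<in> S n"
      using s j before unfolding S_def by auto
    then show ?thesis
      by (auto intro!: image_eqI[where x = "map uminus s"])
  qed (use s j before in \<open>auto simp: S_def\<close>)
next
  fix s assume "s \<in> S n \<union> map uminus ` S n"
  then obtain t where t: "t \<in> S n" "s = t \<or> s = map uminus t"
    by blast
  then obtain i where "i < n" "t ! i = 1" "length t = n"
    unfolding S_def by auto
  then have "i < n \<and> s ! i \<noteq> 0"
    using t(2) by auto
  moreover have "s \<in> ternary_lists n"
    using t S_subset_ternary_lists map_uminus_ternary_lists by blast
  ultimately show "s \<in> {s \<in> ternary_lists n. \<exists>i<n. s ! i \<noteq> 0}"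
    by blast
qed

lemma S_Int_map_uminus_S: "S n \<inter> map uminus ` S n = {}"
proof (intro equals0I)
  fix s assume "s \<in> S n \<inter> map uminus ` S n"
  then obtain t where s: "s \<in> S n" and t: "t \<in> S n" "s = map uminus t"
    by blast
  obtain i where i: "s ! i = 1" "\<forall>k<i. s ! k = 0"
    using s unfolding S_def by auto
  obtain j where "t ! j = 1" "\<forall>k<j. t ! k = 0" "j < length t"
    using t unfolding S_def by auto
  then have j: "s ! j = -1" "\<forall>k<j. s ! k = 0"
    using t by auto
  show False
    using i j by (cases i j rule: linorder_cases) auto
qed

lemma card_ternary_lists_eq_double_card_S:
  assumes sign_invariant: "\<And>s. s \<in> ternary_lists n \<Longrightarrow> P (map uminus s) \<longleftrightarrow> P s"
    and nonzero: "\<And>s. s \<in> ternary_lists n \<Longrightarrow> P s \<Longrightarrow> \<exists>i<n. s ! i \<noteq> 0"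
  shows "card {s \<in> ternary_lists n. P s} = 2 * card {s \<in> S n. P s}"
proof -
  let ?A = "{s \<in> S n. P s}"
  have invariant_on_S: "P (map uminus t) \<longleftrightarrow> P t" if "t \<in> S n" for t
    using that S_subset_ternary_lists sign_invariant by blast
  have "{s \<in> ternary_lists n. P s} = ?A \<union> map uminus ` ?A"
  proof -
    have "{s \<in> ternary_lists n. P s} = {s \<in> ternary_lists n. \<exists>i<n. s ! i \<noteq> 0} \<inter> {s. P s}"
      using nonzero by auto
    also have "\<dots> = ?A \<union> map uminus ` ?A"
      unfolding ternary_lists_nonzero_eq by (auto simp: invariant_on_S)
    finally show ?thesis .
  qed
  moreover have "?A \<inter> map uminus ` ?A = {}"
    using S_Int_map_uminus_S by blast
  moreover have "finite ?A"
    using finite_subset[OF S_subset_ternary_lists finite_ternary_lists] by simp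
  ultimately show ?thesis
    by (simp add: card_Un_disjoint card_image inj_on_def)
qed

text \<open>At a single coordinate, \<open>agrees a v\<close> is condition (ii) with k = 1 and
  \<open>apart a v\<close> says that condition (i) fails.\<close>

definition agrees :: "int \<Rightarrow> int \<Rightarrow> bool" where
  "agrees a v \<longleftrightarrow> a = 0 \<or> v = 0 \<or> v = a"

definition apart :: "int \<Rightarrow> int \<Rightarrow> bool" where
  "apart a v \<longleftrightarrow> a = 0 \<or> v = 0"

lemma eliminates_Num_iff:
  assumes "length x = length s"
  shows "eliminates (map Num x) s \<longleftrightarrow>
    ((\<forall>i<length s. agrees (x ! i) (s ! i)) \<or> (\<forall>i<length s. agrees (- x ! i) (s ! i))) \<and>
    \<not> (\<forall>i<length s. apart (x ! i) (s ! i))"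
proof -
  have "(\<exists>k\<in>{1, -1::int}. \<forall>i<length s. s ! i \<noteq> 0 \<and> map Num x ! i \<noteq> Num 0 \<longrightarrow> map Num x ! i = Num (k * s ! i))
      \<longleftrightarrow> (\<forall>i<length s. agrees (x ! i) (s ! i)) \<or> (\<forall>i<length s. agrees (- x ! i) (s ! i))"
    using assms by (auto simp: agrees_def)
  then show ?thesis
    using assms unfolding eliminates_def apart_def by auto
qed

lemma of_bool_eliminates:
  assumes "length x = length s"
  shows "(of_bool (eliminates (map Num x) s) :: int) =
    of_bool (\<forall>i<length s. agrees (x ! i) (s ! i)) + of_bool (\<forall>i<length s. agrees (- x ! i) (s ! i))
    - 2 * of_bool (\<forall>i<length s. apart (x ! i) (s ! i))"
proof -
  have "apart a v \<longleftrightarrow> agrees a v \<and> agrees (- a) v" for a v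
    by (auto simp: agrees_def apart_def)
  then have "(\<forall>i<length s. apart (x ! i) (s ! i)) \<longleftrightarrow>
      (\<forall>i<length s. agrees (x ! i) (s ! i)) \<and> (\<forall>i<length s. agrees (- x ! i) (s ! i))"
    by auto
  then show ?thesis
    unfolding eliminates_Num_iff[OF assms] by auto
qed

lemma eliminates_map_uminus:
  assumes "length x = length s"
  shows "eliminates (map Num x) (map uminus s) \<longleftrightarrow> eliminates (map Num x) s"
proof -
  have "agrees a (- v) \<longleftrightarrow> agrees (- a) v" and "apart a (- v) \<longleftrightarrow> apart a v" for a v
    by (auto simp: agrees_def apart_def)
  then show ?thesis
    using assms by (simp add: eliminates_Num_iff disj_commute)
qed

lemma finite_Elim: "finite (Elim n X)"
  by (rule finite_subset[OF _ finite_ternary_lists]) (use S_subset_ternary_lists in \<open>auto simp: Elim_def\<close>)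

lemma Elim_insert: "Elim n (insert x X) = Elim n {x} \<union> Elim n X"
  by (auto simp: Elim_def)

lemma double_card_Elim_inter:
  assumes "length x = n" and "length y = n"
  shows "2 * card (Elim n {x} \<inter> Elim n {y}) =
    card {s \<in> ternary_lists n. eliminates (map Num x) s \<and> eliminates (map Num y) s}"
proof -
  have "Elim n {x} \<inter> Elim n {y} = {s \<in> S n. eliminates (map Num x) s \<and> eliminates (map Num y) s}"
    unfolding Elim_def by auto
  moreover have "card {s \<in> ternary_lists n. eliminates (map Num x) s \<and> eliminates (map Num y) s} =
      2 * card {s \<in> S n. eliminates (map Num x) s \<and> eliminates (map Num y) s}"
    using assms
    by (intro card_ternary_lists_eq_double_card_S)
      (auto simp: ternary_lists_def eliminates_map_uminus eliminates_def)
  ultimately show ?thesis by simp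
qed

lemma card_Elim_singleton:
  assumes x: "x \<in> ternary_lists n"
  shows "int (card (Elim n {x})) =
    3 ^ card {i. i < n \<and> x ! i = 0} * (2 ^ card {i. i < n \<and> x ! i \<noteq> 0} - 1)"
proof -
  have len: "length x = n" and entries: "\<forall>i<n. x ! i \<in> {-1, 0, 1}"
    using x nth_mem by (auto simp: ternary_lists_def)
  note count = sum_ternary_lists_support_constraint[OF entries]
  have agrees_sum: "(\<Sum>s\<in>ternary_lists n. of_bool (\<forall>i<n. agrees (x ! i) (s ! i))) =
      (3::int) ^ card {i. i < n \<and> x ! i = 0} * 2 ^ card {i. i < n \<and> x ! i \<noteq> 0}"
    by (rule count) (auto simp: agrees_def)
  have agrees_neg_sum: "(\<Sum>s\<in>ternary_lists n. of_bool (\<forall>i<n. agrees (- x ! i) (s ! i))) =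
      (3::int) ^ card {i. i < n \<and> x ! i = 0} * 2 ^ card {i. i < n \<and> x ! i \<noteq> 0}"
    by (rule count[where R = "\<lambda>a. agrees (- a)"]) (auto simp: agrees_def)
  have apart_sum: "(\<Sum>s\<in>ternary_lists n. of_bool (\<forall>i<n. apart (x ! i) (s ! i))) =
      (3::int) ^ card {i. i < n \<and> x ! i = 0} * 1 ^ card {i. i < n \<and> x ! i \<noteq> 0}"
    by (rule count) (auto simp: apart_def)
  have "2 * int (card (Elim n {x})) = (\<Sum>s\<in>ternary_lists n. of_bool (eliminates (map Num x) s))"
    using double_card_Elim_inter[OF len len] by (simp add: finite_ternary_lists Int_def)
  also have "\<dots> = (\<Sum>s\<in>ternary_lists n.
      of_bool (\<forall>i<n. agrees (x ! i) (s ! i)) + of_bool (\<forall>i<n. agrees (- x ! i) (s ! i))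
      - 2 * of_bool (\<forall>i<n. apart (x ! i) (s ! i)))"
    by (intro sum.cong refl) (simp add: of_bool_eliminates len ternary_lists_def)
  also have "\<dots> = 2 * 3 ^ card {i. i < n \<and> x ! i = 0} * (2 ^ card {i. i < n \<and> x ! i \<noteq> 0} - 1)"
    unfolding sum.distrib sum_subtractf sum_distrib_left[symmetric] agrees_sum agrees_neg_sum apart_sum
    by (simp add: algebra_simps)
  finally show ?thesis by simp
qed

lemma card_Elim_inter:
  assumes len: "length x = n" "length y = n"
    and cols: "\<forall>i<n. (x ! i, y ! i) \<in> {(1, 1), (1, -1), (1, 0), (0, 1), (0, 0)}"
  defines "a1 \<equiv> column_count n x y 1 1" and "a2 \<equiv> column_count n x y 1 (-1)"
    and "b1 \<equiv> column_count n x y 1 0" and "b2 \<equiv> column_count n x y 0 1"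
    and "c \<equiv> column_count n x y 0 0"
  shows "int (card (Elim n {x} \<inter> Elim n {y})) =
    3 ^ c * (2 ^ (b1 + b2) * (2 ^ a1 + 2 ^ a2) - 2 ^ (b1 + 1) - 2 ^ (b2 + 1) + 2)"
proof -
  define joint where "joint A B s =
      (of_bool (\<forall>i<n. A (x ! i) (s ! i)) * of_bool (\<forall>i<n. B (y ! i) (s ! i)) :: int)"
    for A B and s :: "int list"
  define count where "count A B = (\<Sum>s\<in>ternary_lists n. joint A B s)" for A B
  define agrees_neg where "agrees_neg a = agrees (- a)" for a
  have count_columns: "count A B =
      (\<Prod>(a, b)\<in>{(1, 1), (1, -1), (1, 0), (0, 1), (0, 0)}.
        (of_bool (A a (-1) \<and> B b (-1)) + of_bool (A a 0 \<and> B b 0) + of_bool (A a 1 \<and> B b 1))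
          ^ column_count n x y a b)" for A B
    unfolding count_def joint_def by (rule sum_ternary_lists_joint_columns) (use cols in simp_all)
  have "2 * int (card (Elim n {x} \<inter> Elim n {y})) =
      (\<Sum>s\<in>ternary_lists n. of_bool (eliminates (map Num x) s) * of_bool (eliminates (map Num y) s))"
    using double_card_Elim_inter[OF len] by (simp add: finite_ternary_lists Int_def flip: of_bool_conj)
  also have "\<dots> = (\<Sum>s\<in>ternary_lists n.
      (of_bool (\<forall>i<n. agrees (x ! i) (s ! i)) + of_bool (\<forall>i<n. agrees_neg (x ! i) (s ! i))
        - 2 * of_bool (\<forall>i<n. apart (x ! i) (s ! i))) *
      (of_bool (\<forall>i<n. agrees (y ! i) (s ! i)) + of_bool (\<forall>i<n. agrees_neg (y ! i) (s ! i))
        - 2 * of_bool (\<forall>i<n. apart (y ! i) (s ! i))))"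
    by (intro sum.cong refl) (simp add: of_bool_eliminates len ternary_lists_def agrees_neg_def)
  also have "\<dots> = (\<Sum>s\<in>ternary_lists n. joint agrees agrees s + joint agrees agrees_neg s
      + joint agrees_neg agrees s + joint agrees_neg agrees_neg s
      - 2 * joint agrees apart s - 2 * joint agrees_neg apart s
      - 2 * joint apart agrees s - 2 * joint apart agrees_neg s + 4 * joint apart apart s)"
    by (intro sum.cong refl) (simp add: joint_def algebra_simps)
  also have "\<dots> = count agrees agrees + count agrees agrees_neg + count agrees_neg agrees
      + count agrees_neg agrees_neg - 2 * count agrees apart - 2 * count agrees_neg apart
      - 2 * count apart agrees - 2 * count apart agrees_neg + 4 * count apart apart"
    unfolding count_def by (simp only: sum.distrib sum_subtractf sum_distrib_left)
  also have "\<dots> = 2 * (3 ^ c * (2 ^ (b1 + b2) * (2 ^ a1 + 2 ^ a2) - 2 ^ (b1 + 1) - 2 ^ (b2 + 1) + 2))"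
    by (simp add: count_columns agrees_neg_def agrees_def apart_def a1_def a2_def b1_def b2_def c_def
        power_add algebra_simps)
  finally show ?thesis by simp
qed

theorem mainTheorem14:
  fixes n a1 a2 b1 b2 c :: nat and x y :: "int list"
  assumes "x \<in> S n" and "y \<in> S n"
    and "\<forall>i<n. (x ! i, y ! i) \<in> {(1, 1), (1, -1), (1, 0), (0, 1), (0, 0)}"
    and "a1 = card {i. i < n \<and> x ! i = 1 \<and> y ! i = 1}"
    and "a2 = card {i. i < n \<and> x ! i = 1 \<and> y ! i = -1}"
    and "b1 = card {i. i < n \<and> x ! i = 1 \<and> y ! i = 0}"
    and "b2 = card {i. i < n \<and> x ! i = 0 \<and> y ! i = 1}"
    and "c = card {i. i < n \<and> x ! i = 0 \<and> y ! i = 0}"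
  shows "int (card (Elim n {x} \<inter> Elim n {y})) =
           3 ^ c * (2 ^ (b1 + b2) * (2 ^ a1 + 2 ^ a2) - 2 ^ (b1 + 1) - 2 ^ (b2 + 1) + 2)
         \<and> int (card (Elim n {x, y})) =
           3 ^ c * (3 ^ b1 * 2 ^ (a1 + a2 + b2) + 3 ^ b2 * 2 ^ (a1 + a2 + b1)
                    - 2 ^ (b1 + b2) * (2 ^ a1 + 2 ^ a2) - 3 ^ b1 - 3 ^ b2
                    + 2 ^ (b1 + 1) + 2 ^ (b2 + 1) - 2)"
proof -
  note cols = assms(3)
  have x: "x \<in> ternary_lists n" and y: "y \<in> ternary_lists n"
    using assms(1,2) S_subset_ternary_lists by auto
  then have len: "length x = n" "length y = n"
    by (auto simp: ternary_lists_def)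
  have counts: "a1 = column_count n x y 1 1" "a2 = column_count n x y 1 (-1)"
      "b1 = column_count n x y 1 0" "b2 = column_count n x y 0 1" "c = column_count n x y 0 0"
    using assms(4-8) by (simp_all add: column_count_def)
  have x_zeros: "card {i. i < n \<and> x ! i = 0} = b2 + c"
    unfolding assms(7,8) using card_lessThan_group[OF _ cols, of "\<lambda>c. fst c = 0"] by simp
  have x_support: "card {i. i < n \<and> x ! i \<noteq> 0} = a1 + a2 + b1"
    unfolding assms(4-6) using card_lessThan_group[OF _ cols, of "\<lambda>c. fst c \<noteq> 0"] by simp
  have y_zeros: "card {i. i < n \<and> y ! i = 0} = b1 + c"
    unfolding assms(6,8) using card_lessThan_group[OF _ cols, of "\<lambda>c. snd c = 0"] by simp
  have y_support: "card {i. i < n \<and> y ! i \<noteq> 0} = a1 + a2 + b2"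
    unfolding assms(4,5,7) using card_lessThan_group[OF _ cols, of "\<lambda>c. snd c \<noteq> 0"] by simp
  have inter: "int (card (Elim n {x} \<inter> Elim n {y})) =
      3 ^ c * (2 ^ (b1 + b2) * (2 ^ a1 + 2 ^ a2) - 2 ^ (b1 + 1) - 2 ^ (b2 + 1) + 2)"
    unfolding counts by (rule card_Elim_inter[OF len cols])
  have "card (Elim n {x}) + card (Elim n {y}) = card (Elim n {x, y}) + card (Elim n {x} \<inter> Elim n {y})"
    unfolding Elim_insert[of n x "{y}"] by (intro card_Un_Int finite_Elim)
  moreover have "int (card (Elim n {x})) = 3 ^ (b2 + c) * (2 ^ (a1 + a2 + b1) - 1)"
    using card_Elim_singleton[OF x] x_zeros x_support by simp
  moreover have "int (card (Elim n {y})) = 3 ^ (b1 + c) * (2 ^ (a1 + a2 + b2) - 1)"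
    using card_Elim_singleton[OF y] y_zeros y_support by simp
  ultimately show ?thesis
    using inter by (simp add: power_add algebra_simps)
qed

end
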